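(* Let $\{a_k\}_{k\in\mathbb Z}$ be a sequence of real numbers with $a_k=0$ for all $k\le0$, such that $\{a_k\}_{k\ge1}\in\mathrm{GM}$ and $\lim_{k\to\infty}a_k=0$. Then $\{a_k\}_{k\in\mathbb Z}\in\overline{\mathrm{GM}}$.
   Context: A sequence $\{a_k\}_{k\ge1}$ belongs to $\mathrm{GM}$ if there exist $C>0$ and $\lambda>1$ such that for every $n\ge1$, $\sum_{k=n}^{2n}|a_k-a_{k+1}|\le\frac Cn\sum_{n/\lambda\le k\le\lambda n}|a_k|$. For a two-sided sequence $a$: $|\Delta a_k|=|a_k-a_{k+1}|$ for $k>0$, $|\Delta a_k|=|a_k-a_{k-1}|$ for $k<0$, $|\Delta a_0|=|a_0-a_1|+|a_0-a_{-1}|$; for $k\ge0$, $\widehat a_{2^k}=\sup_{2^k\le|m|<2^{k+1}}\frac1{|m|+1}|\sum_{j=0}^ma_j|$, where for $m<0$, $\sum_{j=0}^ma_j$ means $\sum_{j=m}^0a_j$; $[\cdot]$ is the floor function. The sequence $a$ belongs to $\overline{\mathrm{GM}}$ if there is $C'>0$ such that for every $n\ge0$, $\sum_{[2^{n-1}]\le|m|<2^n}|\Delta a_m|\le C'\sup_{k\in\mathbb N_0}\min(1,2^{k-n})\widehat a_{2^k}$. *)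

theory Defs
  imports "HOL-Analysis.Analysis"
begin

text \<open>One-sided sequences are indexed by nat; only indices k \<ge> 1 are used.\<close>
definition GM :: "(nat \<Rightarrow> real) \<Rightarrow> bool" where
  "GM a \<longleftrightarrow> (\<exists>C>0. \<exists>L>1. \<forall>n\<ge>1.
     (\<Sum>k=n..2*n. \<bar>a k - a (k+1)\<bar>)
       \<le> C / real n * (\<Sum>k\<in>{k. 1 \<le> k \<and> real n / L \<le> real k \<and> real k \<le> L * real n}. \<bar>a k\<bar>))"

definition Delta_abs :: "(int \<Rightarrow> real) \<Rightarrow> int \<Rightarrow> real" where
  "Delta_abs a k =
     (if k > 0 then \<bar>a k - a (k+1)\<bar>
      else if k < 0 then \<bar>a k - a (k-1)\<bar>
      else \<bar>a 0 - a 1\<bar> + \<bar>a 0 - a (-1)\<bar>)"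

definition partial_sum :: "(int \<Rightarrow> real) \<Rightarrow> int \<Rightarrow> real" where
  "partial_sum a m = (if m \<ge> 0 then (\<Sum>j=0..m. a j) else (\<Sum>j=m..0. a j))"

text \<open>hat a_{2^k}\<close>
definition hat_a :: "(int \<Rightarrow> real) \<Rightarrow> nat \<Rightarrow> real" where
  "hat_a a k = Sup ((\<lambda>m. \<bar>partial_sum a m\<bar> / (real_of_int \<bar>m\<bar> + 1))
                     ` {m::int. 2^k \<le> \<bar>m\<bar> \<and> \<bar>m\<bar> < 2^(k+1)})"

text \<open>The supremum on the right may be +\<infinity>; it is taken in the extended reals.\<close>
definition GM_bar :: "(int \<Rightarrow> real) \<Rightarrow> bool" where
  "GM_bar a \<longleftrightarrow> (\<exists>C'>0. \<forall>n::nat.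
     ereal (\<Sum>m\<in>{m::int. \<lfloor>2 powr (real n - 1)\<rfloor> \<le> \<bar>m\<bar> \<and> \<bar>m\<bar> < 2^n}. Delta_abs a m)
       \<le> ereal C' * (SUP k::nat. ereal (min 1 (2 powr (real k - real n)) * hat_a a k)))"

end

theory Submission
  imports Defs
begin

(* Fix n, let Q = sup_k min(1, 2^(k-n)) hat_a(2^k), and write S_m for the partial sums of a on
   the positive half-line.  As a vanishes on the non-positive integers, the definition of hat_a
   gives |S_m| <= 4 Q (m + 2^(n-1)).
   The GM condition bounds the variation V_t of a on the dyadic block [2^t, 2^(t+1)) by 2^-t
   times the masses A_s (sums of |a_k| over a block) of the blocks with |s - t| <= P.  In the
   other direction, cutting block t into 2^q pieces, the mass of each piece is at most the
   absolute value of its sum, a difference of two partial sums, plus its length times the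
   variation.  Hence if |S_m| <= R (m + 2^n), the weighted supremum
   M = sup_s A_s / max(2^s, 2^n) satisfies M <= 6 2^q R + 2^-q K M with K depending only on the
   GM constants; for 2^q >= 2 K the last term is absorbed, so M <= 12 2^q R, and the GM
   inequality turns this into V_n <= K M <= 12 2^q K R.  The hypothesis a_k -> 0 is only used to
   know that M is finite. *)

lemma abs_diff_le_sum_abs_diff:
  fixes b :: "nat \<Rightarrow> real"
  assumes "i \<le> j"
  shows "\<bar>b i - b j\<bar> \<le> (\<Sum>k\<in>{i..<j}. \<bar>b k - b (Suc k)\<bar>)"
proof -
  have "b i - b j = (\<Sum>k\<in>{i..<j}. b k - b (Suc k))"
    using sum_Suc_diff'[OF assms, of b] by (simp add: sum_subtractf)
  then show ?thesis
    by simp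
qed

lemma abs_diff_le_interval_variation:
  fixes b :: "nat \<Rightarrow> real"
  assumes "i \<in> {u..v}" "j \<in> {u..v}"
  shows "\<bar>b i - b j\<bar> \<le> (\<Sum>k\<in>{u..<v}. \<bar>b k - b (Suc k)\<bar>)"
proof -
  have mono: "(\<Sum>k\<in>{x..<y}. \<bar>b k - b (Suc k)\<bar>) \<le> (\<Sum>k\<in>{u..<v}. \<bar>b k - b (Suc k)\<bar>)"
    if "u \<le> x" "y \<le> v" for x y
    by (rule sum_mono2) (use that in auto)
  show ?thesis
  proof (cases "i \<le> j")
    case True
    then show ?thesis
      using abs_diff_le_sum_abs_diff[of i j b] mono[of i j] assms by auto
  next
    case False
    then show ?thesis
      using abs_diff_le_sum_abs_diff[of j i b] mono[of j i] assms by (auto simp: abs_minus_commute)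
  qed
qed

lemma sum_abs_le_abs_sum_plus_variation:
  fixes b :: "nat \<Rightarrow> real"
  shows "(\<Sum>i\<in>{u..<v}. \<bar>b i\<bar>)
    \<le> \<bar>\<Sum>i\<in>{u..<v}. b i\<bar> + real (v - u) * (\<Sum>k\<in>{u..<v}. \<bar>b k - b (Suc k)\<bar>)"
proof (cases "u < v")
  case False
  then show ?thesis by simp
next
  case True
  let ?I = "{u..<v}"
  let ?V = "\<Sum>k\<in>?I. \<bar>b k - b (Suc k)\<bar>"
  have pointwise: "real (v - u) * \<bar>b i\<bar> \<le> \<bar>\<Sum>j\<in>?I. b j\<bar> + real (v - u) * ?V" if "i \<in> ?I" for i
  proof -
    have "real (v - u) * \<bar>b i\<bar> = \<bar>(\<Sum>j\<in>?I. b j) + (\<Sum>j\<in>?I. b i - b j)\<bar>"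
      by (simp add: sum_subtractf abs_mult)
    also have "\<dots> \<le> \<bar>\<Sum>j\<in>?I. b j\<bar> + (\<Sum>j\<in>?I. \<bar>b i - b j\<bar>)"
      by (rule order_trans[OF abs_triangle_ineq]) simp
    also have "(\<Sum>j\<in>?I. \<bar>b i - b j\<bar>) \<le> (\<Sum>j\<in>?I. ?V)"
      by (rule sum_mono) (use abs_diff_le_interval_variation that in auto)
    finally show ?thesis by simp
  qed
  have "real (v - u) * (\<Sum>i\<in>?I. \<bar>b i\<bar>) = (\<Sum>i\<in>?I. real (v - u) * \<bar>b i\<bar>)"
    by (simp add: sum_distrib_left)
  also have "\<dots> \<le> (\<Sum>i\<in>?I. \<bar>\<Sum>j\<in>?I. b j\<bar> + real (v - u) * ?V)"
    by (rule sum_mono) (rule pointwise)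
  also have "\<dots> = real (v - u) * (\<bar>\<Sum>j\<in>?I. b j\<bar> + real (v - u) * ?V)"
    using True by (simp add: of_nat_diff)
  finally show ?thesis
    using True by (simp add: mult_le_cancel_left_pos)
qed

lemma sum_abs_le_partial_sums:
  fixes b :: "nat \<Rightarrow> real"
  assumes "\<And>m. m \<le> v \<Longrightarrow> \<bar>\<Sum>j<m. b j\<bar> \<le> K"
  shows "(\<Sum>i\<in>{u..<v}. \<bar>b i\<bar>) \<le> 2 * real (v - u) * K"
proof -
  have "\<bar>b i\<bar> \<le> 2 * K" if "i \<in> {u..<v}" for i
  proof -
    have "\<bar>b i\<bar> \<le> \<bar>\<Sum>j<Suc i. b j\<bar> + \<bar>\<Sum>j<i. b j\<bar>"
      by simp
    also have "\<dots> \<le> 2 * K"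
      using assms[of "Suc i"] assms[of i] that by simp
    finally show ?thesis .
  qed
  then have "(\<Sum>i\<in>{u..<v}. \<bar>b i\<bar>) \<le> (\<Sum>i\<in>{u..<v}. 2 * K)"
    by (rule sum_mono)
  then show ?thesis by simp
qed

lemma sum_abs_le_partial_sums_plus_variation:
  fixes b :: "nat \<Rightarrow> real"
  assumes "\<And>m. m \<le> u + p * h \<Longrightarrow> \<bar>\<Sum>j<m. b j\<bar> \<le> K"
  shows "(\<Sum>i\<in>{u..<u + p * h}. \<bar>b i\<bar>)
    \<le> 2 * real p * K + real h * (\<Sum>k\<in>{u..<u + p * h}. \<bar>b k - b (Suc k)\<bar>)"
  using assms
proof (induction p)
  case 0
  then show ?case by simp
next
  case (Suc p)
  let ?v = "u + p * h"
  have split: "(\<Sum>i\<in>{u..<u + Suc p * h}. f i) = (\<Sum>i\<in>{u..<?v}. f i) + (\<Sum>i\<in>{?v..<?v + h}. f i)"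
    for f :: "nat \<Rightarrow> real"
    using sum.atLeastLessThan_concat[of u ?v "?v + h" f] by (simp add: algebra_simps)
  have IH: "(\<Sum>i\<in>{u..<?v}. \<bar>b i\<bar>) \<le> 2 * real p * K + real h * (\<Sum>k\<in>{u..<?v}. \<bar>b k - b (Suc k)\<bar>)"
    using Suc by simp
  have "\<bar>\<Sum>i\<in>{?v..<?v + h}. b i\<bar> = \<bar>(\<Sum>j<?v + h. b j) - (\<Sum>j<?v. b j)\<bar>"
    using sum_diff_nat_ivl[of 0 ?v "?v + h" b] by (simp add: atLeast0LessThan)
  also have "\<dots> \<le> 2 * K"
    using Suc.prems[of "?v + h"] Suc.prems[of ?v] by simp
  finally have "\<bar>\<Sum>i\<in>{?v..<?v + h}. b i\<bar> \<le> 2 * K" .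
  then show ?case
    unfolding split
    using IH sum_abs_le_abs_sum_plus_variation[of b ?v "?v + h"] by (simp add: algebra_simps)
qed

lemma sum_dyadic_blocks:
  fixes f :: "nat \<Rightarrow> 'a::comm_monoid_add"
  assumes "i \<le> j"
  shows "(\<Sum>k\<in>{2^i..<2^j}. f k) = (\<Sum>s\<in>{i..<j}. \<Sum>k\<in>{2^s..<2^Suc s}. f k)"
  using assms
proof (induction j)
  case 0
  then show ?case by simp
next
  case (Suc j)
  show ?case
  proof (cases "i = Suc j")
    case False
    then have "i \<le> j" using Suc.prems by simp
    then have "(\<Sum>k\<in>{2^i..<2^Suc j}. f k) = (\<Sum>k\<in>{2^i..<2^j}. f k) + (\<Sum>k\<in>{2^j..<2^Suc j}. f k)"
      by (intro sum.atLeastLessThan_concat[symmetric]) (auto simp: power_increasing)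
    then show ?thesis
      using Suc.IH \<open>i \<le> j\<close> by simp
  qed simp
qed

definition dyadic_mass :: "(nat \<Rightarrow> real) \<Rightarrow> nat \<Rightarrow> real" where
  "dyadic_mass b s = (\<Sum>k\<in>{2^s..<2^Suc s}. \<bar>b k\<bar>)"

definition dyadic_variation :: "(nat \<Rightarrow> real) \<Rightarrow> nat \<Rightarrow> real" where
  "dyadic_variation b s = (\<Sum>k\<in>{2^s..<2^Suc s}. \<bar>b k - b (Suc k)\<bar>)"

lemma dyadic_mass_nonneg: "0 \<le> dyadic_mass b s"
  by (simp add: dyadic_mass_def sum_nonneg)

lemma dyadic_variation_nonneg: "0 \<le> dyadic_variation b s"
  by (simp add: dyadic_variation_def sum_nonneg)

lemma GM_window_subset_dyadic:
  fixes L :: real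
  assumes "L > 1" "L < 2^P"
  shows "{k. 1 \<le> k \<and> real (2^t) / L \<le> real k \<and> real k \<le> L * real (2^t)} \<subseteq> {2^(t-P)..<2^Suc (t+P)}"
proof
  fix k assume k: "k \<in> {k. 1 \<le> k \<and> real (2^t) / L \<le> real k \<and> real k \<le> L * real (2^t)}"
  have "real k \<le> L * 2^t"
    using k by simp
  also have "\<dots> < 2^P * 2^t"
    using assms by simp
  also have "\<dots> < real (2^Suc (t+P))"
    by (simp add: power_add)
  finally have "k < 2^Suc (t+P)"
    by (simp only: of_nat_less_iff)
  moreover have "2^(t-P) \<le> k"
  proof (cases "P \<le> t")
    case True
    have "(2::real)^(t-P) = 2^t / 2^P"
      using True by (simp add: power_diff)
    also have "\<dots> \<le> 2^t / L"
      using assms by (intro divide_left_mono) auto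
    also have "\<dots> \<le> real k"
      using k by simp
    finally have "real (2^(t-P)) \<le> real k"
      by simp
    then show ?thesis
      by (simp only: of_nat_le_iff)
  qed (use k in simp)
  ultimately show "k \<in> {2^(t-P)..<2^Suc (t+P)}"
    by simp
qed

lemma GM_imp_dyadic_variation_le:
  assumes "GM b"
  obtains C P where "C > 0"
    "\<And>t. dyadic_variation b t \<le> C / 2^t * (\<Sum>s\<in>{t-P..t+P}. dyadic_mass b s)"
proof -
  from assms obtain C L where "C > 0" and L: "L > 1"
    and gm: "\<And>n. n \<ge> 1 \<Longrightarrow> (\<Sum>k=n..2*n. \<bar>b k - b (k+1)\<bar>)
       \<le> C / real n * (\<Sum>k\<in>{k. 1 \<le> k \<and> real n / L \<le> real k \<and> real k \<le> L * real n}. \<bar>b k\<bar>)"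
    unfolding GM_def by blast
  obtain P :: nat where P: "L < 2^P"
    using real_arch_pow[of 2 L] by auto
  have "dyadic_variation b t \<le> C / 2^t * (\<Sum>s\<in>{t-P..t+P}. dyadic_mass b s)" for t
  proof -
    let ?W = "{k. 1 \<le> k \<and> real (2^t) / L \<le> real k \<and> real k \<le> L * real (2^t)}"
    have "dyadic_variation b t \<le> (\<Sum>k=2^t..2*2^t. \<bar>b k - b (k+1)\<bar>)"
      unfolding dyadic_variation_def Suc_eq_plus1 by (rule sum_mono2) auto
    also have "\<dots> \<le> C / 2^t * (\<Sum>k\<in>?W. \<bar>b k\<bar>)"
      using gm[of "2^t"] by simp
    also have "\<dots> \<le> C / 2^t * (\<Sum>k\<in>{2^(t-P)..<2^Suc (t+P)}. \<bar>b k\<bar>)"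
      using \<open>C > 0\<close> GM_window_subset_dyadic[OF L P, of t] by (intro mult_left_mono sum_mono2) auto
    also have "(\<Sum>k\<in>{2^(t-P)..<2^Suc (t+P)}. \<bar>b k\<bar>) = (\<Sum>s\<in>{t-P..t+P}. dyadic_mass b s)"
      unfolding dyadic_mass_def atLeastLessThanSuc_atLeastAtMost[symmetric] by (rule sum_dyadic_blocks) simp
    finally show ?thesis .
  qed
  with \<open>C > 0\<close> show thesis by (rule that)
qed

lemma dyadic_variation_le_weighted_mass:
  assumes gm: "\<And>t. dyadic_variation b t \<le> C / 2^t * (\<Sum>s\<in>{t-P..t+P}. dyadic_mass b s)"
    and "C \<ge> 0" "M \<ge> 0"
    and mass: "\<And>s. dyadic_mass b s \<le> M * max (2^s) (2^n)"
  shows "2^t * dyadic_variation b t \<le> C * (2*P+1) * 2^P * M * max (2^t) (2^n)"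
proof -
  let ?W = "2^P * max (2^t) (2^n) :: real"
  have "dyadic_mass b s \<le> M * ?W" if "s \<in> {t-P..t+P}" for s
  proof -
    have "max (2^s) (2^n) \<le> max (2^(P+t)) (2^(P+n) :: real)"
      using that by (intro max.mono power_increasing) auto
    also have "\<dots> = ?W"
      by (simp add: power_add max_mult_distrib_left)
    finally have "max (2^s) (2^n) \<le> ?W" .
    then show ?thesis
      using mass[of s] \<open>M \<ge> 0\<close> by (meson mult_left_mono order_trans)
  qed
  then have "(\<Sum>s\<in>{t-P..t+P}. dyadic_mass b s) \<le> card {t-P..t+P} * (M * ?W)"
    using sum_bounded_above[of "{t-P..t+P}"] by blast
  also have "\<dots> \<le> (2*P+1) * (M * ?W)"
    using \<open>M \<ge> 0\<close> by (intro mult_right_mono mult_nonneg_nonneg) (auto simp: le_max_iff_disj)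
  finally have "C * (\<Sum>s\<in>{t-P..t+P}. dyadic_mass b s) \<le> C * ((2*P+1) * (M * ?W))"
    using \<open>C \<ge> 0\<close> by (rule mult_left_mono)
  moreover have "2^t * dyadic_variation b t \<le> C * (\<Sum>s\<in>{t-P..t+P}. dyadic_mass b s)"
    using gm[of t] by (simp add: field_simps)
  ultimately show ?thesis
    by (simp add: algebra_simps)
qed

lemma dyadic_mass_le_partial_sums_plus_variation:
  fixes b :: "nat \<Rightarrow> real"
  assumes partial: "\<And>m. m \<le> 2^Suc t \<Longrightarrow> \<bar>\<Sum>j<m. b j\<bar> \<le> K"
  shows "2^q * dyadic_mass b t \<le> 2 * 4^q * K + 2^t * dyadic_variation b t"
proof (cases "q \<le> t")
  case True
  have blocks: "(2::nat)^Suc t = 2^t + 2^q * 2^(t-q)"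
    using True by (simp add: mult_2 flip: power_add)
  have "dyadic_mass b t \<le> 2 * 2^q * K + 2^(t-q) * dyadic_variation b t"
    using sum_abs_le_partial_sums_plus_variation[of "2^t" "2^q" "2^(t-q)" b K] partial
    unfolding dyadic_mass_def dyadic_variation_def blocks by simp
  then have "2^q * dyadic_mass b t \<le> 2^q * (2 * 2^q * K + 2^(t-q) * dyadic_variation b t)"
    by simp
  also have "\<dots> = 2 * 4^q * K + 2^t * dyadic_variation b t"
    using True by (simp add: algebra_simps power_mult_distrib[symmetric] flip: power_add)
  finally show ?thesis .
next
  case False
  have "0 \<le> K"
    using partial[of 0] by simp
  have "dyadic_mass b t \<le> 2 * 2^t * K"
    using sum_abs_le_partial_sums[of "2^Suc t" b K "2^t"] partial
    unfolding dyadic_mass_def by simp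
  also have "\<dots> \<le> 2 * 2^q * K"
    using False \<open>0 \<le> K\<close> by (intro mult_right_mono) (auto simp: power_increasing)
  finally have "2^q * dyadic_mass b t \<le> 2^q * (2 * 2^q * K)"
    by simp
  also have "\<dots> = 2 * 4^q * K"
    by (simp add: power_mult_distrib[symmetric])
  moreover have "0 \<le> 2^t * dyadic_variation b t"
    by (simp add: dyadic_variation_nonneg)
  ultimately show ?thesis
    by linarith
qed

lemma dyadic_mass_le_bound:
  assumes "\<And>k. \<bar>b k\<bar> \<le> B"
  shows "dyadic_mass b s \<le> 2^s * B"
proof -
  have "dyadic_mass b s \<le> (\<Sum>k\<in>{2^s..<2^Suc s :: nat}. B)"
    unfolding dyadic_mass_def by (rule sum_mono) (rule assms)
  then show ?thesis
    by simp
qed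

lemma dyadic_mass_le_weighted:
  fixes b :: "nat \<Rightarrow> real" and D M R :: real
  assumes partial: "\<And>m. \<bar>\<Sum>j<m. b j\<bar> \<le> R * (real m + 2^n)"
    and variation: "2^t * dyadic_variation b t \<le> D * M * max (2^t) (2^n)"
    and "2 * D \<le> 2^q" "0 \<le> M"
  shows "dyadic_mass b t \<le> (6 * 2^q * R + M / 2) * max (2^t) (2^n)"
proof -
  let ?W = "max (2^t) (2^n) :: real"
  have "0 \<le> R"
    using partial[of 0] by (simp, meson zero_le_mult_iff zero_less_power zero_less_numeral not_le)
  have "\<bar>\<Sum>j<m. b j\<bar> \<le> 3 * R * ?W" if "m \<le> 2^Suc t" for m
  proof -
    have "real m \<le> real (2^Suc t)"
      using that by (simp only: of_nat_le_iff)
    then have "real m + 2^n \<le> 3 * ?W"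
      by simp
    then have "R * (real m + 2^n) \<le> R * (3 * ?W)"
      using \<open>0 \<le> R\<close> by (rule mult_left_mono)
    then show ?thesis
      using partial[of m] by (simp add: mult.assoc mult.left_commute)
  qed
  then have "2^q * dyadic_mass b t \<le> 2 * 4^q * (3 * R * ?W) + 2^t * dyadic_variation b t"
    by (rule dyadic_mass_le_partial_sums_plus_variation)
  also have "2^t * dyadic_variation b t \<le> 2^q / 2 * (M * ?W)"
  proof -
    have "D * (M * ?W) \<le> 2^q / 2 * (M * ?W)"
      using assms(3,4) by (intro mult_right_mono) (auto simp: le_max_iff_disj)
    then show ?thesis
      using variation by (simp add: mult.assoc)
  qed
  also have "2 * 4^q * (3 * R * ?W) + 2^q / 2 * (M * ?W) = 2^q * ((6 * 2^q * R + M / 2) * ?W)"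
    by (simp add: algebra_simps power_mult_distrib[symmetric])
  finally show ?thesis
    by simp
qed

lemma dyadic_variation_le_partial_sum_bound:
  fixes b :: "nat \<Rightarrow> real" and B C R :: real
  assumes bounded: "\<And>k. \<bar>b k\<bar> \<le> B"
    and gm: "\<And>t. dyadic_variation b t \<le> C / 2^t * (\<Sum>s\<in>{t-P..t+P}. dyadic_mass b s)"
    and "C \<ge> 0"
    and q: "2 * (C * (2*P+1) * 2^P) \<le> 2^q"
    and partial: "\<And>m. \<bar>\<Sum>j<m. b j\<bar> \<le> R * (real m + 2^n)"
  shows "dyadic_variation b n \<le> C * (2*P+1) * 2^P * (12 * 2^q * R)"
proof -
  define D where "D = C * (2*P+1) * 2^P"
  define W where "W s = max (2^s) (2^n :: real)" for s
  define M where "M = (SUP s. dyadic_mass b s / W s)"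
  have W_pos: "0 < W s" for s
    by (simp add: W_def less_max_iff_disj)
  have "dyadic_mass b s / W s \<le> B" for s
  proof -
    have "2^s * B \<le> W s * B"
      using bounded[of 0] by (intro mult_right_mono) (auto simp: W_def)
    then show ?thesis
      using dyadic_mass_le_bound[of b B s, OF bounded] W_pos[of s] by (simp add: pos_divide_le_eq mult.commute)
  qed
  then have bdd: "bdd_above (range (\<lambda>s. dyadic_mass b s / W s))"
    by (intro bdd_aboveI2)
  have below_M: "dyadic_mass b s / W s \<le> M" for s
    unfolding M_def by (rule cSUP_upper[OF UNIV_I bdd])
  have mass_le: "dyadic_mass b s \<le> M * W s" for s
    using below_M[of s] W_pos[of s] by (simp add: pos_divide_le_eq)
  have "0 \<le> dyadic_mass b 0 / W 0"
    using dyadic_mass_nonneg W_pos by (intro divide_nonneg_pos)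
  then have "0 \<le> M"
    using below_M[of 0] by linarith
  have variation: "2^t * dyadic_variation b t \<le> D * M * W t" for t
    using dyadic_variation_le_weighted_mass[OF gm \<open>C \<ge> 0\<close> \<open>0 \<le> M\<close> mass_le[unfolded W_def]]
    unfolding D_def W_def .
  have "dyadic_mass b t / W t \<le> 6 * 2^q * R + M / 2" for t
    using dyadic_mass_le_weighted[OF partial variation[unfolded W_def] q[folded D_def] \<open>0 \<le> M\<close>] W_pos[of t]
    by (simp add: pos_divide_le_eq W_def)
  then have "M \<le> 6 * 2^q * R + M / 2"
    unfolding M_def by (intro cSUP_least) auto
  then have "D * M \<le> D * (12 * 2^q * R)"
    using \<open>C \<ge> 0\<close> unfolding D_def by (intro mult_left_mono) auto
  moreover have "dyadic_variation b n \<le> D * M"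
    using variation[of n] by (simp add: W_def)
  ultimately show ?thesis
    unfolding D_def by linarith
qed

lemma GM_bounded_imp_dyadic_variation_le:
  fixes b :: "nat \<Rightarrow> real"
  assumes "GM b" and bounded: "\<And>k. \<bar>b k\<bar> \<le> B"
  obtains D where "\<And>n R. (\<And>m. \<bar>\<Sum>j<m. b j\<bar> \<le> R * (real m + 2^n)) \<Longrightarrow> dyadic_variation b n \<le> D * R"
proof -
  obtain C P where "C > 0"
    and gm: "\<And>t. dyadic_variation b t \<le> C / 2^t * (\<Sum>s\<in>{t-P..t+P}. dyadic_mass b s)"
    using GM_imp_dyadic_variation_le[OF \<open>GM b\<close>] by blast
  obtain q :: nat where q: "2 * (C * (2*P+1) * 2^P) < 2^q"
    using real_arch_pow[of 2] by auto
  show thesis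
  proof (rule that)
    fix n R assume "\<And>m. \<bar>\<Sum>j<m. b j\<bar> \<le> R * (real m + 2^n)"
    then have "dyadic_variation b n \<le> C * (2*P+1) * 2^P * (12 * 2^q * R)"
      using \<open>C > 0\<close> q by (intro dyadic_variation_le_partial_sum_bound[OF bounded gm]) auto
    then show "dyadic_variation b n \<le> C * (2*P+1) * 2^P * (12 * 2^q) * R"
      by (simp add: mult.assoc)
  qed
qed

lemma partial_sum_of_nat: "partial_sum a (int m) = (\<Sum>j<Suc m. a (int j))"
proof -
  have "partial_sum a (int m) = (\<Sum>j\<in>int ` {0..m}. a j)"
    by (simp add: partial_sum_def image_int_atLeastAtMost)
  also have "\<dots> = (\<Sum>j<Suc m. a (int j))"
    by (simp add: sum.reindex atLeast0AtMost lessThan_Suc_atMost)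
  finally show ?thesis .
qed

lemma partial_sum_div_le_hat_a:
  assumes "2^k \<le> \<bar>m\<bar>" "\<bar>m\<bar> < 2^(k+1)"
  shows "\<bar>partial_sum a m\<bar> / (real_of_int \<bar>m\<bar> + 1) \<le> hat_a a k"
proof -
  let ?X = "{m::int. 2^k \<le> \<bar>m\<bar> \<and> \<bar>m\<bar> < 2^(k+1)}"
  have "?X \<subseteq> {-(2^(k+1))..2^(k+1)}"
    by auto
  then have "finite ?X"
    by (rule finite_subset) simp
  then show ?thesis
    unfolding hat_a_def using assms by (intro cSup_upper bdd_above_finite) auto
qed

lemma hat_a_nonneg: "0 \<le> hat_a a k"
proof -
  have "0 \<le> \<bar>partial_sum a (2^k)\<bar> / (real_of_int \<bar>2^k\<bar> + 1)"
    by simp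
  also have "\<dots> \<le> hat_a a k"
    by (rule partial_sum_div_le_hat_a) auto
  finally show ?thesis .
qed

lemma weighted_hat_bound_nonneg:
  assumes "\<And>k. min 1 (2 powr (real k - real n)) * hat_a a k \<le> Q"
  shows "0 \<le> Q"
proof -
  have "0 \<le> min 1 (2 powr (real 0 - real n)) * hat_a a 0"
    by (intro mult_nonneg_nonneg hat_a_nonneg) simp
  then show ?thesis
    using assms[of 0] by linarith
qed

lemma abs_partial_sum_le_weighted_hat:
  assumes Q: "\<And>k. min 1 (2 powr (real k - real n)) * hat_a a k \<le> Q" and "m \<noteq> 0"
  shows "\<bar>partial_sum a m\<bar> \<le> Q * (real_of_int \<bar>m\<bar> + 2^(n+1))"
proof -
  have "\<exists>k. 2^k \<le> nat \<bar>m\<bar> \<and> nat \<bar>m\<bar> < 2^(k+1)"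
    by (rule ex_power_ivl1) (use \<open>m \<noteq> 0\<close> in auto)
  then obtain k where k: "2^k \<le> nat \<bar>m\<bar>" "nat \<bar>m\<bar> < 2^(k+1)"
    by blast
  then have k_int: "2^k \<le> \<bar>m\<bar>" "\<bar>m\<bar> < 2^(k+1)"
    by (simp_all add: nat_less_iff)
  have "0 \<le> Q"
    using Q by (rule weighted_hat_bound_nonneg)
  have hat: "\<bar>partial_sum a m\<bar> \<le> (real_of_int \<bar>m\<bar> + 1) * hat_a a k"
    using partial_sum_div_le_hat_a[OF k_int, of a] by (simp add: pos_divide_le_eq mult.commute)
  have weight: "2 powr (real k - real n) = 2^k / 2^n"
    by (simp add: powr_diff powr_realpow)
  show ?thesis
  proof (cases "n \<le> k")
    case True
    then have "(2::real)^n \<le> 2^k"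
      by (simp add: power_increasing)
    then have "hat_a a k \<le> Q"
      using Q[of k] unfolding weight by (simp add: min_def)
    then have "(real_of_int \<bar>m\<bar> + 1) * hat_a a k \<le> (real_of_int \<bar>m\<bar> + 1) * Q"
      by (intro mult_left_mono) auto
    also have "\<dots> \<le> (real_of_int \<bar>m\<bar> + 2^(n+1)) * Q"
      using \<open>0 \<le> Q\<close> one_le_power[of "2::real" "n+1"] by (intro mult_right_mono) auto
    finally show ?thesis
      using hat by (simp add: mult.commute)
  next
    case False
    then have "(2::real)^k \<le> 2^n"
      by (simp add: power_increasing)
    then have "2^k / 2^n * hat_a a k \<le> Q"
      using Q[of k] False unfolding weight by (simp add: min_def)
    then have "2^(k+1) * hat_a a k \<le> 2^(n+1) * Q"
      by (simp add: field_simps)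
    moreover have "\<bar>m\<bar> + 1 \<le> 2^(k+1)"
      using k_int by linarith
    then have "real_of_int (\<bar>m\<bar> + 1) \<le> real_of_int (2^(k+1))"
      by (simp only: of_int_le_iff)
    then have "real_of_int \<bar>m\<bar> + 1 \<le> 2^(k+1)"
      by simp
    then have "(real_of_int \<bar>m\<bar> + 1) * hat_a a k \<le> 2^(k+1) * hat_a a k"
      by (intro mult_right_mono hat_a_nonneg)
    moreover have "0 \<le> Q * real_of_int \<bar>m\<bar>"
      using \<open>0 \<le> Q\<close> by simp
    ultimately show ?thesis
      using hat by (simp add: algebra_simps)
  qed
qed

lemma abs_sum_lessThan_le_weighted_hat:
  assumes zero: "\<And>k. k \<le> 0 \<Longrightarrow> a k = 0"
    and Q: "\<And>k. min 1 (2 powr (real k - real (Suc n))) * hat_a a k \<le> Q"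
  shows "\<bar>\<Sum>j<m. a (int j)\<bar> \<le> 4 * Q * (real m + 2^n)"
proof (cases m)
  case 0
  then show ?thesis
    using weighted_hat_bound_nonneg[OF Q] by simp
next
  case (Suc m')
  then have sum_eq: "(\<Sum>j<m. a (int j)) = partial_sum a (int m')"
    by (simp add: partial_sum_of_nat)
  show ?thesis
  proof (cases "m' = 0")
    case True
    then show ?thesis
      using sum_eq zero[of 0] weighted_hat_bound_nonneg[OF Q] by (simp add: partial_sum_def)
  next
    case False
    then have "\<bar>partial_sum a (int m')\<bar> \<le> Q * (real m' + 2^(n+2))"
      using abs_partial_sum_le_weighted_hat[OF Q, of "int m'"] by simp
    also have "\<dots> \<le> 4 * Q * (real m + 2^n)"
      using weighted_hat_bound_nonneg[OF Q] Suc by (simp add: algebra_simps)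
    finally show ?thesis
      using sum_eq by simp
  qed
qed

lemma sum_Delta_abs_annulus:
  assumes zero: "\<And>k. k \<le> 0 \<Longrightarrow> a k = 0" and "1 \<le> lo"
  shows "(\<Sum>m\<in>{m::int. int lo \<le> \<bar>m\<bar> \<and> \<bar>m\<bar> < int hi}. Delta_abs a m)
       = (\<Sum>k\<in>{lo..<hi}. \<bar>a (int k) - a (int (Suc k))\<bar>)"
proof -
  let ?X = "{m::int. int lo \<le> \<bar>m\<bar> \<and> \<bar>m\<bar> < int hi}"
  have "?X \<subseteq> {-int hi..int hi}"
    by auto
  then have "finite ?X"
    by (rule finite_subset) simp
  moreover have "int ` {lo..<hi} \<subseteq> ?X"
    by auto
  moreover have "Delta_abs a m = 0" if "m \<in> ?X - int ` {lo..<hi}" for m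
  proof -
    have "m < 0"
    proof (rule ccontr)
      assume "\<not> m < 0"
      then have "m = int (nat m)" "nat m \<in> {lo..<hi}"
        using that by auto
      then show False
        using that by blast
    qed
    then show ?thesis
      unfolding Delta_abs_def using zero[of m] zero[of "m - 1"] by simp
  qed
  ultimately have "(\<Sum>m\<in>?X. Delta_abs a m) = (\<Sum>m\<in>int ` {lo..<hi}. Delta_abs a m)"
    by (intro sum.mono_neutral_right) auto
  also have "\<dots> = (\<Sum>k\<in>{lo..<hi}. \<bar>a (int k) - a (int (Suc k))\<bar>)"
    using \<open>1 \<le> lo\<close> by (simp add: sum.reindex Delta_abs_def add.commute)
  finally show ?thesis .
qed

lemma sum_Delta_abs_dyadic_level:
  assumes zero: "\<And>k. k \<le> 0 \<Longrightarrow> a k = 0"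
  shows "(\<Sum>m\<in>{m::int. \<lfloor>2 powr (real n - 1)\<rfloor> \<le> \<bar>m\<bar> \<and> \<bar>m\<bar> < 2^n}. Delta_abs a m)
       = (if n = 0 then \<bar>a 1\<bar> else dyadic_variation (\<lambda>k. a (int k)) (n - 1))"
proof (cases n)
  case 0
  have "{m::int. \<lfloor>2 powr (real n - 1)\<rfloor> \<le> \<bar>m\<bar> \<and> \<bar>m\<bar> < 2^n} = {0}"
    using 0 by (auto simp: powr_minus)
  then show ?thesis
    using 0 zero[of 0] zero[of "-1"] by (simp add: Delta_abs_def)
next
  case (Suc t)
  have "\<lfloor>2 powr (real n - 1)\<rfloor> = int (2^t)"
    using Suc by (simp add: powr_realpow)
  then have "{m::int. \<lfloor>2 powr (real n - 1)\<rfloor> \<le> \<bar>m\<bar> \<and> \<bar>m\<bar> < 2^n}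
      = {m. int (2^t) \<le> \<bar>m\<bar> \<and> \<bar>m\<bar> < int (2^Suc t)}"
    using Suc by simp
  then show ?thesis
    using Suc sum_Delta_abs_annulus[OF zero, where lo = "2^t" and hi = "2^Suc t"] by (simp add: dyadic_variation_def)
qed

lemma sum_Delta_abs_dyadic_level_le:
  assumes zero: "\<And>k. k \<le> 0 \<Longrightarrow> a k = 0"
    and D: "\<And>n R. (\<And>m. \<bar>\<Sum>j<m. a (int j)\<bar> \<le> R * (real m + 2^n)) \<Longrightarrow>
      dyadic_variation (\<lambda>k. a (int k)) n \<le> D * R"
    and Q: "\<And>k. min 1 (2 powr (real k - real n)) * hat_a a k \<le> Q"
  shows "(\<Sum>m\<in>{m::int. \<lfloor>2 powr (real n - 1)\<rfloor> \<le> \<bar>m\<bar> \<and> \<bar>m\<bar> < 2^n}. Delta_abs a m)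
    \<le> max 3 (4 * D) * Q"
proof -
  have "0 \<le> Q"
    using Q by (rule weighted_hat_bound_nonneg)
  have "(if n = 0 then \<bar>a 1\<bar> else dyadic_variation (\<lambda>k. a (int k)) (n - 1)) \<le> max 3 (4 * D) * Q"
  proof (cases n)
    case 0
    have "partial_sum a 1 = a 1"
      using partial_sum_of_nat[of a 1] zero[of 0] by (simp add: numeral_2_eq_2)
    then have "\<bar>a 1\<bar> \<le> 3 * Q"
      using abs_partial_sum_le_weighted_hat[OF Q, of 1] 0 by simp
    also have "\<dots> \<le> max 3 (4 * D) * Q"
      using \<open>0 \<le> Q\<close> by (intro mult_right_mono) auto
    finally show ?thesis
      using 0 by simp
  next
    case (Suc t)
    have "dyadic_variation (\<lambda>k. a (int k)) t \<le> D * (4 * Q)"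
      using abs_sum_lessThan_le_weighted_hat[OF zero Q[unfolded Suc]] by (intro D) (simp add: mult.assoc)
    also have "\<dots> = (4 * D) * Q"
      by simp
    also have "\<dots> \<le> max 3 (4 * D) * Q"
      using \<open>0 \<le> Q\<close> by (intro mult_right_mono) auto
    finally show ?thesis
      using Suc by simp
  qed
  then show ?thesis
    by (simp only: sum_Delta_abs_dyadic_level[OF zero])
qed

lemma GM_barI:
  assumes "C > 0"
    and "\<And>n Q. (\<And>k. min 1 (2 powr (real k - real n)) * hat_a a k \<le> Q) \<Longrightarrow>
      (\<Sum>m\<in>{m::int. \<lfloor>2 powr (real n - 1)\<rfloor> \<le> \<bar>m\<bar> \<and> \<bar>m\<bar> < 2^n}. Delta_abs a m) \<le> C * Q"
  shows "GM_bar a"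
  unfolding GM_bar_def
proof (intro exI[of _ C] conjI allI)
  fix n :: nat
  define F where "F k = min 1 (2 powr (real k - real n)) * hat_a a k" for k
  let ?T = "\<Sum>m\<in>{m::int. \<lfloor>2 powr (real n - 1)\<rfloor> \<le> \<bar>m\<bar> \<and> \<bar>m\<bar> < 2^n}. Delta_abs a m"
  have "ereal ?T \<le> ereal C * (SUP k. ereal (F k))"
  proof (cases "SUP k. ereal (F k)")
    case (real Q)
    then have "F k \<le> Q" for k
      by (metis SUP_upper UNIV_I ereal_less_eq(3))
    then show ?thesis
      using assms(2)[of n Q] real by (simp add: F_def)
  next
    case PInf
    then show ?thesis
      using \<open>C > 0\<close> by simp
  next
    case MInf
    moreover have "ereal (F 0) \<le> (SUP k. ereal (F k))"
      by (rule SUP_upper) simp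
    ultimately show ?thesis
      by simp
  qed
  then show "ereal ?T \<le> ereal C * (SUP k. ereal (min 1 (2 powr (real k - real n)) * hat_a a k))"
    by (simp only: F_def)
qed (fact \<open>C > 0\<close>)

theorem mainTheorem12:
  fixes a :: "int \<Rightarrow> real"
  assumes "\<And>k. k \<le> 0 \<Longrightarrow> a k = 0"
    and "GM (\<lambda>k. a (int k))"
    and "(\<lambda>k. a (int k)) \<longlonglongrightarrow> 0"
  shows "GM_bar a"
proof -
  have "Bseq (\<lambda>k. a (int k))"
    using assms(3) by (intro convergent_imp_Bseq convergentI)
  then obtain B where "\<And>k. \<bar>a (int k)\<bar> \<le> B"
    unfolding Bseq_def by auto
  then obtain D where D: "\<And>n R. (\<And>m. \<bar>\<Sum>j<m. a (int j)\<bar> \<le> R * (real m + 2^n)) \<Longrightarrow>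
      dyadic_variation (\<lambda>k. a (int k)) n \<le> D * R"
    using GM_bounded_imp_dyadic_variation_le[OF assms(2)] by blast
  show ?thesis
    by (rule GM_barI[of "max 3 (4 * D)"])
      (simp_all add: sum_Delta_abs_dyadic_level_le[of a D, OF assms(1) D])
qed

end
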